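(* Let $X$ have a pdf $f$ satisfying Conditions (A) and (B) below, and fix the uniform quantizer $Q_{\mathrm{uni}}^\delta$. Then the zero-wait sampler is asymptotically optimal: $$\lim_{\delta\to0}\Big[\mathrm{AoI}(S_{\mathrm z},Q_{\mathrm{uni}}^\delta,F^* )-\inf_S\mathrm{AoI}(S,Q_{\mathrm{uni}}^\delta,F^* )\Big]=0,$$ where the infimum is over all stationary deterministic sampling policies $S$.
   Context: Let $X$ be a real random variable with pdf $f$. Condition (A): $f$ is continuous and differentiable, and its support is a bounded interval $I$. Let $M=\max f$. Condition (B): $\int_I f\log_2^2 f\,dx$ and $-\int_I f\log_2 f\,dx$ exist and are finite. Quantizer. The uniform quantizer $Q_{\mathrm{uni}}^\delta$ partitions $I$ into consecutive cells of length $\delta$, with midpoint representation points. Let $p_i$ be the probability that $X$ lies in cell $i$. Codes. A real-valued code assigns lengths $l_i\in\mathbb R^+$ to the cells, subject to $\sum_i2^{-l_i}\le1$. The random codeword length is $L=l_i$ when $X$ is in cell $i$. Sampling policies. A stationary deterministic sampling policy $S$ is a measurable function $z:[0,\infty)\to[0,W]$, for some fixed $W$, which determines the waiting time $Z=z(L)$. The zero-wait policy $S_{\mathrm z}$ has $z\equiv0$. Objective. The AoI is $\mathrm{AoI}(S,Q,l)=\frac{E[(L+Z)^2]}{2E[L+Z]}+E[L]$, and $\mathrm{AoI}(S,Q,F^* )=\inf_l\mathrm{AoI}(S,Q,l)$, the infimum over real-valued codes. *)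

theory Defs
  imports "HOL-Analysis.Analysis"
begin

definition num_cells :: "real \<Rightarrow> real \<Rightarrow> real \<Rightarrow> nat" where
  "num_cells a b d = nat \<lceil>(b - a) / d\<rceil>"

definition cell_prob :: "(real \<Rightarrow> real) \<Rightarrow> real \<Rightarrow> real \<Rightarrow> real \<Rightarrow> nat \<Rightarrow> real" where
  "cell_prob f a b d i = integral {a + real i * d .. min b (a + real (Suc i) * d)} f"

definition real_codes :: "nat \<Rightarrow> (nat \<Rightarrow> real) set" where
  "real_codes N = {l. (\<forall>i<N. 0 < l i) \<and> (\<Sum>i<N. 2 powr (- l i)) \<le> 1}"

definition sampling_policies :: "real \<Rightarrow> (real \<Rightarrow> real) set" where
  "sampling_policies W = {z. z \<in> borel_measurable borel \<and> (\<forall>x\<ge>0. 0 \<le> z x \<and> z x \<le> W)}"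

text \<open>AoI(S,Q,l) = E[(L+Z)^2] / (2 E[L+Z]) + E[L], with L = l_i w.p. p_i and Z = z(L).\<close>
definition AoI :: "(nat \<Rightarrow> real) \<Rightarrow> nat \<Rightarrow> (real \<Rightarrow> real) \<Rightarrow> (nat \<Rightarrow> real) \<Rightarrow> real" where
  "AoI p N z l =
     (\<Sum>i<N. p i * (l i + z (l i))^2) / (2 * (\<Sum>i<N. p i * (l i + z (l i))))
     + (\<Sum>i<N. p i * l i)"

text \<open>AoI(S,Q,F*) = inf over real-valued codes.\<close>
definition AoI_opt :: "(nat \<Rightarrow> real) \<Rightarrow> nat \<Rightarrow> (real \<Rightarrow> real) \<Rightarrow> real" where
  "AoI_opt p N z = (INF l \<in> real_codes N. AoI p N z l)"

definition AoI_uni :: "(real \<Rightarrow> real) \<Rightarrow> real \<Rightarrow> real \<Rightarrow> real \<Rightarrow> (real \<Rightarrow> real) \<Rightarrow> real" where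
  "AoI_uni f a b d z = AoI_opt (cell_prob f a b d) (num_cells a b d) z"

end

theory Submission
  imports Defs "HOL-Real_Asymp.Real_Asymp"
begin

text \<open>Let \<open>p\<^sub>i\<close> be the cell probabilities of the quantizer of step \<open>\<delta>\<close> and \<open>H\<close> their
  entropy. For every sampling policy and every real code, Gibbs' inequality gives \<open>E[L] \<ge> H\<close>
  and Jensen gives \<open>E[(L+Z)\<^sup>2] \<ge> E[L+Z]\<^sup>2\<close>, so the AoI is at least \<open>3/2 E[L] \<ge> 3/2 H\<close>.
  Zero wait with the Shannon code \<open>l\<^sub>i = \<delta> - log p\<^sub>i\<close> achieves at most
  \<open>3/2 (\<delta> + H) + Var(L) / (2 H)\<close>. If \<open>M\<close> bounds the continuous density, then \<open>p\<^sub>i \<le> M \<delta>\<close>;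
  hence \<open>H \<ge> - log (M \<delta>) \<rightarrow> \<infinity>\<close>, while \<open>Var(L) \<le> \<Sum>\<^sub>i p\<^sub>i log\<^sup>2 (p\<^sub>i / \<delta>)\<close> stays bounded
  because \<open>x log\<^sup>2 x\<close> is bounded on \<open>(0, M]\<close>. The gap is therefore \<open>O(\<delta> + 1 / log (1/\<delta>))\<close>.\<close>

lemma x_ln_squared_le:
  fixes x :: real
  assumes "0 < x"
  shows "x * (ln x)^2 \<le> 4 + x^3"
proof (cases "x \<le> 1")
  case True
  have "ln (1 / sqrt x) \<le> 1 / sqrt x - 1"
    using assms by (intro ln_le_minus_one) simp
  moreover have "ln (1 / sqrt x) = - ln x / 2"
    using assms by (simp add: ln_div ln_sqrt)
  ultimately have "- ln x \<le> 2 / sqrt x"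
    by (simp add: field_simps)
  moreover have "0 \<le> - ln x"
    using True assms by simp
  ultimately have "(- ln x)^2 \<le> (2 / sqrt x)^2"
    by (intro power_mono)
  also have "\<dots> = 4 / x"
    using assms by (simp add: power_divide)
  finally have "x * (ln x)^2 \<le> 4"
    using assms by (simp add: field_simps)
  moreover have "0 \<le> x^3"
    using assms by simp
  ultimately show ?thesis
    by linarith
next
  case False
  then have "(ln x)^2 \<le> x^2"
    using assms ln_le_minus_one[of x] by (intro power_mono) auto
  then have "x * (ln x)^2 \<le> x * x^2"
    using assms by (intro mult_left_mono) auto
  then show ?thesis
    by (simp add: power3_eq_cube power2_eq_square)
qed

definition mean :: "(nat \<Rightarrow> real) \<Rightarrow> nat \<Rightarrow> (nat \<Rightarrow> real) \<Rightarrow> real" where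
  "mean p N Y = (\<Sum>i<N. p i * Y i)"

definition entropy :: "(nat \<Rightarrow> real) \<Rightarrow> nat \<Rightarrow> real" where
  "entropy p N = mean p N (\<lambda>i. - log 2 (p i))"

lemma AoI_eq_mean:
  "AoI p N z l = mean p N (\<lambda>i. (l i + z (l i))^2) / (2 * mean p N (\<lambda>i. l i + z (l i)))
     + mean p N l"
  by (simp add: AoI_def mean_def)

lemma zero_wait_policy: "0 \<le> W \<Longrightarrow> (\<lambda>_. 0) \<in> sampling_policies W"
  by (simp add: sampling_policies_def)

locale finite_distribution =
  fixes N :: nat and p :: "nat \<Rightarrow> real"
  assumes pos: "i < N \<Longrightarrow> 0 < p i"
    and sum_eq_1: "(\<Sum>i<N. p i) = 1"
begin

lemma N_pos: "0 < N"
  using sum_eq_1 by (intro gr0I) simp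

lemma mean_const [simp]: "mean p N (\<lambda>_. c) = c"
  by (simp add: mean_def sum_distrib_right[symmetric] sum_eq_1)

lemma mean_mono: "(\<And>i. i < N \<Longrightarrow> X i \<le> Y i) \<Longrightarrow> mean p N X \<le> mean p N Y"
  unfolding mean_def using pos by (intro sum_mono mult_left_mono) (auto simp: less_imp_le)

lemma mean_nonneg: "(\<And>i. i < N \<Longrightarrow> 0 \<le> Y i) \<Longrightarrow> 0 \<le> mean p N Y"
  using mean_mono[of "\<lambda>_. 0" Y] by simp

lemma mean_pos: "(\<And>i. i < N \<Longrightarrow> 0 < Y i) \<Longrightarrow> 0 < mean p N Y"
  unfolding mean_def using N_pos pos by (intro sum_pos) auto

lemma mean_affine: "mean p N (\<lambda>i. u * Y i + v) = u * mean p N Y + v"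
proof -
  have "(\<Sum>i<N. p i * (u * Y i + v)) = u * (\<Sum>i<N. p i * Y i) + v * (\<Sum>i<N. p i)"
    by (simp add: sum.distrib sum_distrib_left algebra_simps)
  then show ?thesis
    by (simp add: mean_def sum_eq_1)
qed

lemma mean_square_eq:
  "mean p N (\<lambda>i. (Y i)^2)
     = (mean p N Y)^2 + mean p N (\<lambda>i. (Y i - c)^2) - (mean p N Y - c)^2"
proof -
  have "mean p N (\<lambda>i. (Y i - c)^2) = mean p N (\<lambda>i. (Y i)^2) - 2 * c * mean p N Y + c^2"
    by (simp add: mean_def power2_diff sum_subtractf sum.distrib sum_distrib_left
        sum_distrib_right[symmetric] sum_eq_1 algebra_simps)
  then show ?thesis
    by (simp add: power2_diff)
qed

lemma square_mean_le_mean_square: "(mean p N Y)^2 \<le> mean p N (\<lambda>i. (Y i)^2)"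
  using mean_square_eq[of Y "mean p N Y"] mean_nonneg[of "\<lambda>i. (Y i - mean p N Y)^2"] by simp

lemma mean_square_le:
  "mean p N (\<lambda>i. (Y i)^2) \<le> (mean p N Y)^2 + mean p N (\<lambda>i. (Y i - c)^2)"
  using mean_square_eq[of Y c] by simp

lemma entropy_le_mean_length:
  assumes "l \<in> real_codes N"
  shows "entropy p N \<le> mean p N l"
proof -
  have term_le: "p i - 2 powr - l i \<le> ln 2 * (p i * l i - p i * - log 2 (p i))" if "i < N" for i
  proof -
    have pi: "0 < p i" using pos that .
    have "ln (2 powr - l i / p i) \<le> 2 powr - l i / p i - 1"
      using pi by (intro ln_le_minus_one) simp
    then have "p i * (- l i * ln 2 - ln (p i)) \<le> p i * (2 powr - l i / p i - 1)"
      using pi by (intro mult_left_mono) (auto simp: ln_div ln_powr)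
    moreover have "p i * (2 powr - l i / p i - 1) = 2 powr - l i - p i"
      using pi by (simp add: field_simps)
    ultimately have "p i - 2 powr - l i \<le> p i * l i * ln 2 + p i * ln (p i)"
      by (simp add: algebra_simps)
    also have "\<dots> = ln 2 * (p i * l i - p i * - log 2 (p i))"
      by (simp add: log_def field_simps)
    finally show ?thesis .
  qed
  have "0 \<le> 1 - (\<Sum>i<N. 2 powr - l i)"
    using assms by (simp add: real_codes_def)
  also have "\<dots> = (\<Sum>i<N. p i - 2 powr - l i)"
    by (simp add: sum_subtractf sum_eq_1)
  also have "\<dots> \<le> (\<Sum>i<N. ln 2 * (p i * l i - p i * - log 2 (p i)))"
    using term_le by (intro sum_mono) auto
  also have "\<dots> = ln 2 * (mean p N l - entropy p N)"
    by (simp add: entropy_def mean_def sum_distrib_left[symmetric] sum_subtractf sum.distrib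
        sum_negf)
  finally show ?thesis
    by (simp add: zero_le_mult_iff)
qed

lemma AoI_ge_mean_length:
  assumes l: "l \<in> real_codes N" and z: "z \<in> sampling_policies W"
  shows "3/2 * mean p N l \<le> AoI p N z l"
proof -
  define Y where "Y i = l i + z (l i)" for i
  have l_pos: "i < N \<Longrightarrow> 0 < l i" for i
    using l by (simp add: real_codes_def)
  have l_le_Y: "i < N \<Longrightarrow> l i \<le> Y i" for i
    using z l_pos by (fastforce simp: Y_def sampling_policies_def)
  have mean_l_pos: "0 < mean p N l"
    using l_pos by (rule mean_pos)
  have mean_l_le: "mean p N l \<le> mean p N Y"
    using l_le_Y by (rule mean_mono)
  have "mean p N Y / 2 \<le> mean p N (\<lambda>i. (Y i)^2) / (2 * mean p N Y)"
    using mean_l_pos mean_l_le square_mean_le_mean_square[of Y]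
    by (simp add: field_simps power2_eq_square)
  then show ?thesis
    using mean_l_le by (simp add: AoI_eq_mean Y_def[symmetric])
qed

lemma AoI_ge_entropy:
  assumes "l \<in> real_codes N" and "z \<in> sampling_policies W"
  shows "3/2 * entropy p N \<le> AoI p N z l"
  using AoI_ge_mean_length[OF assms] entropy_le_mean_length[OF assms(1)] by linarith

lemma shannon_code_in_real_codes:
  assumes "0 < c"
  shows "(\<lambda>i. c - log 2 (p i)) \<in> real_codes N"
proof -
  have "0 < c - log 2 (p i)" if "i < N" for i
  proof -
    have "p i \<le> 1"
      using member_le_sum[of i "{..<N}" p] pos that sum_eq_1 by (fastforce simp: less_imp_le)
    then have "log 2 (p i) \<le> 0"
      using pos that by simp
    then show ?thesis
      using assms by linarith
  qed
  moreover have "(\<Sum>i<N. 2 powr - (c - log 2 (p i))) = 2 powr - c"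
  proof -
    have "(\<Sum>i<N. 2 powr - (c - log 2 (p i))) = (\<Sum>i<N. p i * 2 powr - c)"
      using pos by (intro sum.cong) (auto simp: powr_diff powr_minus_divide)
    then show ?thesis
      by (simp add: sum_distrib_right[symmetric] sum_eq_1)
  qed
  moreover have "2 powr - c \<le> 1"
    using assms powr_mono[of "- c" 0 2] by simp
  ultimately show ?thesis
    by (simp add: real_codes_def)
qed

lemma mean_shannon_code: "mean p N (\<lambda>i. c - log 2 (p i)) = c + entropy p N"
  using mean_affine[of 1 "\<lambda>i. - log 2 (p i)" c] by (simp add: entropy_def)

lemma AoI_zero_wait_le:
  assumes "0 < mean p N l"
  shows "AoI p N (\<lambda>_. 0) l
           \<le> 3/2 * mean p N l + mean p N (\<lambda>i. (l i - c)^2) / (2 * mean p N l)"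
proof -
  have "AoI p N (\<lambda>_. 0) l = mean p N (\<lambda>i. (l i)^2) / (2 * mean p N l) + mean p N l"
    by (simp add: AoI_eq_mean)
  also have "\<dots> \<le> ((mean p N l)^2 + mean p N (\<lambda>i. (l i - c)^2)) / (2 * mean p N l) + mean p N l"
    using assms mean_square_le[of l c] by (simp add: divide_right_mono)
  also have "\<dots> = 3/2 * mean p N l + mean p N (\<lambda>i. (l i - c)^2) / (2 * mean p N l)"
    using assms by (simp add: field_simps power2_eq_square)
  finally show ?thesis .
qed

lemma entropy_ge_neg_log_max:
  assumes "\<And>i. i < N \<Longrightarrow> p i \<le> q"
  shows "- log 2 q \<le> entropy p N"
proof -
  have "log 2 (p i) \<le> log 2 q" if "i < N" for i
  proof -
    have "0 < q"
      using pos[OF that] assms[OF that] by linarith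
    then show ?thesis
      using pos[OF that] assms[OF that] by simp
  qed
  then show ?thesis
    unfolding entropy_def using mean_mono[of "\<lambda>_. - log 2 q" "\<lambda>i. - log 2 (p i)"] by simp
qed

lemma mean_log_ratio_squared_le:
  assumes d: "0 < d" and p_le: "\<And>i. i < N \<Longrightarrow> p i \<le> M * d"
  shows "mean p N (\<lambda>i. (log 2 (p i / d))^2) \<le> real N * d * ((4 + M^3) / (ln 2)^2)"
proof -
  have "p i * (log 2 (p i / d))^2 \<le> d * ((4 + M^3) / (ln 2)^2)" if "i < N" for i
  proof -
    define r where "r = p i / d"
    have r: "0 < r" "r \<le> M"
      using pos[OF that] p_le[OF that] d by (auto simp: r_def field_simps)
    have "r * (ln r)^2 \<le> 4 + M^3"
      using x_ln_squared_le[OF r(1)] power_mono[OF r(2), of 3] r by linarith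
    then have "d * (r * (ln r)^2 / (ln 2)^2) \<le> d * ((4 + M^3) / (ln 2)^2)"
      using d by (intro mult_left_mono divide_right_mono) auto
    moreover have "p i * (log 2 (p i / d))^2 = d * (r * (ln r)^2 / (ln 2)^2)"
      using d by (simp add: r_def log_def power_divide)
    ultimately show ?thesis
      by simp
  qed
  then have "(\<Sum>i<N. p i * (log 2 (p i / d))^2) \<le> (\<Sum>i<N. d * ((4 + M^3) / (ln 2)^2))"
    by (intro sum_mono) auto
  then show ?thesis
    by (simp add: mean_def)
qed

lemma AoI_opt_ge_entropy:
  assumes "z \<in> sampling_policies W"
  shows "3/2 * entropy p N \<le> AoI_opt p N z"
  unfolding AoI_opt_def
proof (rule cINF_greatest)
  show "real_codes N \<noteq> {}"
    using shannon_code_in_real_codes[of 1] by auto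
  show "3/2 * entropy p N \<le> AoI p N z l" if "l \<in> real_codes N" for l
    using that assms by (rule AoI_ge_entropy)
qed

lemma INF_AoI_opt_bounds:
  assumes "0 \<le> W"
  shows "3/2 * entropy p N \<le> (INF z \<in> sampling_policies W. AoI_opt p N z)"
    and "(INF z \<in> sampling_policies W. AoI_opt p N z) \<le> AoI_opt p N (\<lambda>_. 0)"
proof -
  show "3/2 * entropy p N \<le> (INF z \<in> sampling_policies W. AoI_opt p N z)"
    using zero_wait_policy[OF assms] AoI_opt_ge_entropy by (intro cINF_greatest) auto
  have "bdd_below (AoI_opt p N ` sampling_policies W)"
    using AoI_opt_ge_entropy by (intro bdd_belowI2[where m = "3/2 * entropy p N"]) auto
  then show "(INF z \<in> sampling_policies W. AoI_opt p N z) \<le> AoI_opt p N (\<lambda>_. 0)"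
    using zero_wait_policy[OF assms] by (rule cINF_lower)
qed

lemma AoI_opt_zero_wait_le:
  assumes d: "0 < d" and p_le: "\<And>i. i < N \<Longrightarrow> p i \<le> M * d" and H: "0 < entropy p N"
  shows "AoI_opt p N (\<lambda>_. 0)
           \<le> 3/2 * (d + entropy p N) + real N * d * ((4 + M^3) / (ln 2)^2) / (2 * entropy p N)"
proof -
  define l where "l i = d - log 2 (p i)" for i
  have l: "l \<in> real_codes N"
    unfolding l_def using d by (rule shannon_code_in_real_codes)
  have mean_l: "mean p N l = d + entropy p N"
    unfolding l_def by (rule mean_shannon_code)
  have centered: "mean p N (\<lambda>i. (l i - (d - log 2 d))^2) = mean p N (\<lambda>i. (log 2 (p i / d))^2)"
    unfolding mean_def l_def using pos d by (intro sum.cong) (auto simp: log_divide power2_commute)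
  have "bdd_below (AoI p N (\<lambda>_. 0) ` real_codes N)"
    using AoI_ge_entropy[OF _ zero_wait_policy[of 0]]
    by (intro bdd_belowI2[where m = "3/2 * entropy p N"]) auto
  then have "AoI_opt p N (\<lambda>_. 0) \<le> AoI p N (\<lambda>_. 0) l"
    unfolding AoI_opt_def using l by (rule cINF_lower)
  also have "\<dots> \<le> 3/2 * (d + entropy p N) + mean p N (\<lambda>i. (log 2 (p i / d))^2) / (2 * (d + entropy p N))"
    using AoI_zero_wait_le[of l "d - log 2 d"] mean_l centered d H by simp
  also have "\<dots> \<le> 3/2 * (d + entropy p N) + real N * d * ((4 + M^3) / (ln 2)^2) / (2 * entropy p N)"
    using mean_log_ratio_squared_le[OF d p_le] mean_nonneg[of "\<lambda>i. (log 2 (p i / d))^2"] d H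
    by (intro add_left_mono frac_le) auto
  finally show ?thesis .
qed

lemma zero_wait_gap_bounds:
  assumes d: "0 < d" and M: "0 < M" "M * d < 1" and W: "0 \<le> W"
    and p_le: "\<And>i. i < N \<Longrightarrow> p i \<le> M * d"
  shows "0 \<le> AoI_opt p N (\<lambda>_. 0) - (INF z \<in> sampling_policies W. AoI_opt p N z)"
    and "AoI_opt p N (\<lambda>_. 0) - (INF z \<in> sampling_policies W. AoI_opt p N z)
           \<le> 3/2 * d + real N * d * ((4 + M^3) / (ln 2)^2) / (2 * - log 2 (M * d))"
proof -
  have log_pos: "0 < - log 2 (M * d)"
    using M d by simp
  have entropy_ge: "- log 2 (M * d) \<le> entropy p N"
    using p_le by (rule entropy_ge_neg_log_max)
  then have H: "0 < entropy p N"
    using log_pos by linarith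
  show "0 \<le> AoI_opt p N (\<lambda>_. 0) - (INF z \<in> sampling_policies W. AoI_opt p N z)"
    using INF_AoI_opt_bounds(2)[OF W] by simp
  have "AoI_opt p N (\<lambda>_. 0)
      \<le> 3/2 * (d + entropy p N) + real N * d * ((4 + M^3) / (ln 2)^2) / (2 * entropy p N)"
    using d p_le H by (rule AoI_opt_zero_wait_le)
  then have "AoI_opt p N (\<lambda>_. 0) - (INF z \<in> sampling_policies W. AoI_opt p N z)
      \<le> 3/2 * d + real N * d * ((4 + M^3) / (ln 2)^2) / (2 * entropy p N)"
    using INF_AoI_opt_bounds(1)[OF W] distrib_left[of "3/2" d "entropy p N"] by linarith
  also have "\<dots> \<le> 3/2 * d + real N * d * ((4 + M^3) / (ln 2)^2) / (2 * - log 2 (M * d))"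
    using log_pos entropy_ge H d M by (intro add_left_mono divide_left_mono mult_left_mono mult_pos_pos) auto
  finally show "AoI_opt p N (\<lambda>_. 0) - (INF z \<in> sampling_policies W. AoI_opt p N z)
           \<le> 3/2 * d + real N * d * ((4 + M^3) / (ln 2)^2) / (2 * - log 2 (M * d))" .
qed

end

lemma num_cells_bounds:
  assumes "a < b" and "0 < d"
  shows "b - a \<le> real (num_cells a b d) * d" and "real (num_cells a b d) * d \<le> b - a + d"
proof -
  have N: "real (num_cells a b d) = of_int \<lceil>(b - a) / d\<rceil>"
    using assms by (simp add: num_cells_def)
  show "b - a \<le> real (num_cells a b d) * d"
    using assms by (simp add: N pos_divide_le_eq[symmetric])
  show "real (num_cells a b d) * d \<le> b - a + d"
    using of_int_ceiling_le_add_one[of "(b - a) / d"] assms by (simp add: N field_simps)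
qed

lemma cell_start_less:
  assumes "0 < d" and "i < num_cells a b d"
  shows "a + real i * d < b"
proof -
  have "int i < \<lceil>(b - a) / d\<rceil>"
    using assms by (simp add: num_cells_def)
  then have "real i < (b - a) / d"
    by (simp add: less_ceiling_iff)
  then show ?thesis
    using assms by (simp add: field_simps)
qed

lemma sum_cell_prob:
  assumes ab: "a < b" and d: "0 < d" and f: "f integrable_on {a..b}"
  shows "(\<Sum>i<num_cells a b d. cell_prob f a b d i) = integral {a..b} f"
proof -
  have partial: "(\<Sum>i<k. cell_prob f a b d i) = integral {a..min b (a + real k * d)} f"
    if "k \<le> num_cells a b d" for k
    using that
  proof (induction k)
    case 0
    then show ?case
      using ab by (simp add: min_def)
  next
    case (Suc k)
    define hi where "hi = min b (a + real (Suc k) * d)"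
    have k: "a + real k * d < b"
      using Suc.prems d by (intro cell_start_less) auto
    then have "min b (a + real k * d) = a + real k * d"
      by simp
    then have "(\<Sum>i<Suc k. cell_prob f a b d i)
        = integral {a..a + real k * d} f + integral {a + real k * d..hi} f"
      using Suc by (simp add: cell_prob_def hi_def)
    also have "\<dots> = integral {a..hi} f"
      using k d
      by (intro Henstock_Kurzweil_Integration.integral_combine integrable_on_subinterval[OF f])
        (auto simp: hi_def field_simps)
    finally show ?case
      by (simp add: hi_def)
  qed
  have "min b (a + real (num_cells a b d) * d) = b"
    using num_cells_bounds(1)[OF ab d] by simp
  then show ?thesis
    using partial[of "num_cells a b d"] by simp
qed

lemma cell_prob_le:
  assumes d: "0 < d" and i: "i < num_cells a b d" and f: "f integrable_on {a..b}"
    and M: "0 \<le> M" "\<And>x. x \<in> {a..b} \<Longrightarrow> f x \<le> M"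
  shows "cell_prob f a b d i \<le> M * d"
proof -
  define lo where "lo = a + real i * d"
  define hi where "hi = min b (a + real (Suc i) * d)"
  have cell: "lo \<le> hi" "hi - lo \<le> d" "{lo..hi} \<subseteq> {a..b}"
    using cell_start_less[OF d i] d by (auto simp: lo_def hi_def field_simps)
  have "integral {lo..hi} f \<le> integral {lo..hi} (\<lambda>_. M)"
    using cell M by (intro integral_le integrable_on_subinterval[OF f]) auto
  also have "\<dots> = (hi - lo) * M"
    using cell by simp
  also have "\<dots> \<le> M * d"
    using cell M by (simp add: mult.commute mult_left_mono)
  finally show ?thesis
    by (simp add: cell_prob_def lo_def hi_def)
qed

lemma cell_prob_pos:
  assumes d: "0 < d" and i: "i < num_cells a b d"
    and cont: "continuous_on {a..b} f" and nonneg: "\<And>x. 0 \<le> f x"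
    and support: "closure {x. f x \<noteq> 0} = {a..b}"
  shows "0 < cell_prob f a b d i"
proof -
  define lo where "lo = a + real i * d"
  define hi where "hi = min b (a + real (Suc i) * d)"
  have cell: "lo < hi" "{lo..hi} \<subseteq> {a..b}"
    using cell_start_less[OF d i] d by (auto simp: lo_def hi_def field_simps)
  have "\<exists>x\<in>{lo..hi}. f x \<noteq> 0"
  proof (rule ccontr)
    assume "\<not> ?thesis"
    then have "{x. f x \<noteq> 0} \<subseteq> - {lo<..<hi}"
      by auto
    then have "{a..b} \<subseteq> - {lo<..<hi}"
      unfolding support[symmetric] by (intro closure_minimal) auto
    moreover have "(lo + hi) / 2 \<in> {a..b} \<inter> {lo<..<hi}"
      using cell by auto
    ultimately show False
      by blast
  qed
  then have "integral {lo..hi} f \<noteq> 0"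
    using integral_eq_0_iff[of lo hi f] cell nonneg continuous_on_subset[OF cont] by auto
  moreover have "0 \<le> integral {lo..hi} f"
    using cell nonneg continuous_on_subset[OF cont]
    by (intro integral_nonneg integrable_continuous_interval) auto
  ultimately show ?thesis
    by (simp add: cell_prob_def lo_def hi_def)
qed

lemma finite_distribution_cell_prob:
  assumes "a < b" and "0 < d" and "\<And>x. 0 \<le> f x" and "(f has_integral 1) {a..b}"
    and "closure {x. f x \<noteq> 0} = {a..b}" and "continuous_on {a..b} f"
  shows "finite_distribution (num_cells a b d) (cell_prob f a b d)"
  using assms cell_prob_pos sum_cell_prob[of a b d f]
  by unfold_locales (auto simp: integrable_on_def integral_unique)



lemma uniform_zero_wait_gap_bounds:
  assumes ab: "a < b" and nonneg: "\<And>x. 0 \<le> f x" and pdf: "(f has_integral 1) {a..b}"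
    and support: "closure {x. f x \<noteq> 0} = {a..b}" and cont: "continuous_on {a..b} f"
    and M: "0 < M" "\<And>x. x \<in> {a..b} \<Longrightarrow> f x \<le> M"
    and d: "0 < d" "M * d < 1" and W: "0 \<le> W"
  shows "0 \<le> AoI_uni f a b d (\<lambda>_. 0) - (INF z \<in> sampling_policies W. AoI_uni f a b d z)"
    and "AoI_uni f a b d (\<lambda>_. 0) - (INF z \<in> sampling_policies W. AoI_uni f a b d z)
           \<le> 3/2 * d + (b - a + d) * ((4 + M^3) / (ln 2)^2) / (2 * - log 2 (M * d))"
proof -
  interpret finite_distribution "num_cells a b d" "cell_prob f a b d"
    using ab d(1) nonneg pdf support cont by (rule finite_distribution_cell_prob)
  have p_le: "\<And>i. i < num_cells a b d \<Longrightarrow> cell_prob f a b d i \<le> M * d"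
    using d(1) has_integral_integrable[OF pdf] M by (intro cell_prob_le) auto
  note gap_bounds = zero_wait_gap_bounds[OF d(1) M(1) d(2) W p_le]
  show "0 \<le> AoI_uni f a b d (\<lambda>_. 0) - (INF z \<in> sampling_policies W. AoI_uni f a b d z)"
    using gap_bounds(1) by (simp add: AoI_uni_def)
  have "real (num_cells a b d) * d * ((4 + M^3) / (ln 2)^2) / (2 * - log 2 (M * d))
      \<le> (b - a + d) * ((4 + M^3) / (ln 2)^2) / (2 * - log 2 (M * d))"
    using num_cells_bounds(2)[OF ab d(1)] d M
    by (intro divide_right_mono mult_right_mono) auto
  then show "AoI_uni f a b d (\<lambda>_. 0) - (INF z \<in> sampling_policies W. AoI_uni f a b d z)
           \<le> 3/2 * d + (b - a + d) * ((4 + M^3) / (ln 2)^2) / (2 * - log 2 (M * d))"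
    using gap_bounds(2) unfolding AoI_uni_def by linarith
qed

theorem theorem4:
  fixes f :: "real \<Rightarrow> real" and a b W :: real
  assumes ab: "a < b"
    and nonneg: "\<forall>x. 0 \<le> f x"
    and pdf: "(f has_integral 1) {a..b}"
    and support: "closure {x. f x \<noteq> 0} = {a..b}"
    and cont: "continuous_on {a..b} f"
    and diff: "f differentiable_on {a..b}"
    and B1: "(\<lambda>x. f x * (log 2 (f x))\<^sup>2) integrable_on {a..b}"
    and B2: "(\<lambda>x. f x * log 2 (f x)) integrable_on {a..b}"
    and W: "0 \<le> W"
  shows "((\<lambda>d. AoI_uni f a b d (\<lambda>_. 0)
              - (INF z \<in> sampling_policies W. AoI_uni f a b d z)) \<longlongrightarrow> 0) (at_right 0)"
proof -
  have "bounded (f ` {a..b})"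
    using compact_continuous_image[OF cont compact_Icc] by (rule compact_imp_bounded)
  then obtain M where M: "0 < M" "\<And>x. x \<in> {a..b} \<Longrightarrow> f x \<le> M"
    unfolding bounded_pos by (force simp: abs_le_iff)
  note gap_bounds = uniform_zero_wait_gap_bounds[OF ab _ pdf support cont M _ _ W]
  have small: "\<forall>\<^sub>F d in at_right 0. 0 < d \<and> M * d < 1"
    using M(1) eventually_at_right_real[of 0 "1/M"] by (auto elim!: eventually_mono simp: field_simps)
  show ?thesis
  proof (rule tendsto_sandwich[OF _ _ tendsto_const])
    show "\<forall>\<^sub>F d in at_right 0. 0 \<le> AoI_uni f a b d (\<lambda>_. 0)
            - (INF z \<in> sampling_policies W. AoI_uni f a b d z)"
      using small by (rule eventually_mono) (use gap_bounds(1) nonneg in auto)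
    show "\<forall>\<^sub>F d in at_right 0. AoI_uni f a b d (\<lambda>_. 0)
            - (INF z \<in> sampling_policies W. AoI_uni f a b d z)
          \<le> 3/2 * d + (b - a + d) * ((4 + M^3) / (ln 2)^2) / (2 * - log 2 (M * d))"
      using small by (rule eventually_mono) (use gap_bounds(2) nonneg in auto)
    show "((\<lambda>d. 3/2 * d + (b - a + d) * ((4 + M^3) / (ln 2)^2) / (2 * - log 2 (M * d)))
            \<longlongrightarrow> 0) (at_right 0)"
      using M(1) by real_asymp
  qed
qed

end
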